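(* Let $i\in\{1,\dots,M\}$, $j\in\{1,\dots,N\}$, and let $e_0=(1,0,0,\dots)^\top$. For every $z\in\mathbb{C}\setminus\mathbb{N}_0$ the following hold: $$(a_i-1)\big({}_iT^{-1}S\big)S^{-1}\,Q(z)=(z+a_i-1)\,{}_iT^{-1}Q(z)-({}_iT^{-1}H_0)\,e_0,$$ $$b_j\big(T_j^{-1}S\big)S^{-1}\,Q(z)=(z+b_j)\,T_j^{-1}Q(z)-(T_j^{-1}H_0)\,e_0,$$ $$\big(T^{-1}S\big)BS^{-1}\big(\Upsilon Q(z-1)-P(z-1)\big)=z\,T^{-1}Q(z)-T^{-1}P(z)-(T^{-1}H_0)\,e_0,$$ where $\Upsilon:=\eta\,\prod_{i=1}^M(a_i-1)\big/\prod_{j=1}^N(b_j-1)$.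
   Context: Fix integers $M,N\ge0$ and parameters $\eta,a_1,\dots,a_M,b_1,\dots,b_N$. Let $w(z)=\frac{(a_1)_z\cdots(a_M)_z}{\Gamma(z+1)(b_1)_z\cdots(b_N)_z}\eta^z$, $(\alpha)_z=\Gamma(\alpha+z)/\Gamma(\alpha)$, on nodes $k\in\mathbb{N}_0$ (so $w(0)=1$), with finite moments $\rho_n=\sum_kk^nw(k)$ and moment matrix $G=(\rho_{n+m})$ admitting the Cholesky factorization $G=S^{-1}HS^{-\top}$ ($S$ lower unitriangular, $H=\operatorname{diag}(H_0,H_1,\dots)$). $P(z)=S\chi(z)$, $\chi(z)=(1,z,z^2,\dots)^\top$, is the vector of monic orthogonal polynomials $P_n$, and $Q(z)=(Q_0(z),Q_1(z),\dots)^\top$ with second kind functions $Q_n(z)=\sum_{k=0}^\infty\frac{P_n(k)w(k)}{z-k}$. $B$ is the lower Pascal matrix $B_{n,m}=\binom nm$. Inverse parameter shifts: ${}_iT^{-1}f$ is $f$ with $a_i$ replaced by $a_i-1$; $T_j^{-1}f$ is $f$ with $b_j$ replaced by $b_j+1$; $T^{-1}f$ is $f$ with every $a_i$ replaced by $a_i-1$ and every $b_j$ by $b_j-1$ (applied to $S,H_0,P,Q$, the weight, etc.). It is assumed that the parameters are such that all these shifted weights are well defined with finite moments and the Cholesky factorizations of all the shifted moment matrices exist. *)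

theory Defs
  imports Complex_Main
begin

definition wgt :: "complex \<Rightarrow> nat \<Rightarrow> (nat \<Rightarrow> complex) \<Rightarrow> nat \<Rightarrow> (nat \<Rightarrow> complex) \<Rightarrow> nat \<Rightarrow> complex" where
  "wgt eta M a N b k =
     (\<Prod>i=1..M. pochhammer (a i) k) / (fact k * (\<Prod>j=1..N. pochhammer (b j) k)) * eta ^ k"

definition finite_moments :: "(nat \<Rightarrow> complex) \<Rightarrow> bool" where
  "finite_moments w \<longleftrightarrow> (\<forall>n. summable (\<lambda>k. norm (of_nat k ^ n * w k)))"

definition moment :: "(nat \<Rightarrow> complex) \<Rightarrow> nat \<Rightarrow> complex" where
  "moment w n = (\<Sum>k. of_nat k ^ n * w k)"

definition moment_matrix :: "(nat \<Rightarrow> complex) \<Rightarrow> nat \<Rightarrow> nat \<Rightarrow> complex" where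
  "moment_matrix w n m = moment w (n + m)"

definition lower_unitriangular :: "(nat \<Rightarrow> nat \<Rightarrow> complex) \<Rightarrow> bool" where
  "lower_unitriangular S \<longleftrightarrow> (\<forall>n. S n n = 1) \<and> (\<forall>n m. n < m \<longrightarrow> S n m = 0)"

fun ltinv :: "(nat \<Rightarrow> nat \<Rightarrow> complex) \<Rightarrow> nat \<Rightarrow> nat \<Rightarrow> complex" where
  "ltinv S n m = (if n < m then 0 else if n = m then 1
                  else - (\<Sum>k\<in>{m..<n}. S n k * ltinv S k m))"

text \<open>Cholesky factorization G = S^{-1} H S^{-T}, S lower unitriangular,
  H = diag(H_0, H_1, ...) with nonzero entries.
  (All matrix products are finite sums since S^{-1} is lower triangular.)\<close>
definition cholesky :: "(nat \<Rightarrow> nat \<Rightarrow> complex) \<Rightarrow> (nat \<Rightarrow> nat \<Rightarrow> complex) \<Rightarrow> (nat \<Rightarrow> complex) \<Rightarrow> bool" where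
  "cholesky G S H \<longleftrightarrow> lower_unitriangular S \<and> (\<forall>n. H n \<noteq> 0) \<and>
     (\<forall>n m. G n m = (\<Sum>k\<le>min n m. ltinv S n k * H k * ltinv S m k))"

definition ltmv :: "(nat \<Rightarrow> nat \<Rightarrow> complex) \<Rightarrow> (nat \<Rightarrow> complex) \<Rightarrow> nat \<Rightarrow> complex" where
  "ltmv A v n = (\<Sum>k\<le>n. A n k * v k)"

definition pascal :: "nat \<Rightarrow> nat \<Rightarrow> complex" where
  "pascal n m = of_nat (n choose m)"

definition polyP :: "(nat \<Rightarrow> nat \<Rightarrow> complex) \<Rightarrow> nat \<Rightarrow> complex \<Rightarrow> complex" where
  "polyP S n z = (\<Sum>k\<le>n. S n k * z ^ k)"

definition funQ :: "(nat \<Rightarrow> nat \<Rightarrow> complex) \<Rightarrow> (nat \<Rightarrow> complex) \<Rightarrow> nat \<Rightarrow> complex \<Rightarrow> complex" where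
  "funQ S w n z = (\<Sum>k. polyP S n (of_nat k) * w k / (z - of_nat k))"

end

theory Submission
  imports Defs
begin

text \<open>
  Since \<open>Q\<^sub>n(z) = \<Sum>\<^sub>l S\<^sub>n\<^sub>l C\<^sub>l(z)\<close> with the Cauchy moments \<open>C\<^sub>l(z) = \<Sum>\<^sub>k k\<^sup>l w(k) / (z - k)\<close>,
  the vector \<open>S\<^sup>-\<^sup>1 Q(z)\<close> is just \<open>C(z)\<close>. Each shift of the parameters satisfies a contiguity
  relation of the weight: \<open>c w(k) = (k + c) w'(k)\<close> for the shifts of \<open>a\<^sub>i\<close> and \<open>b\<^sub>j\<close>, and
  \<open>\<Upsilon> w(k) = (k + 1) w\<^sub>T(k + 1)\<close> for the total shift, where the Pascal matrix turns moments in
  \<open>k\<close> into moments in \<open>k + 1\<close>. Either way the left-hand side becomes the moment vector of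
  \<open>w'\<close> against \<open>(k + c) / (z - k) = (z + c) / (z - k) - 1\<close>, and integrating \<open>P'\<^sub>n\<close> against
  it gives \<open>(z + c) Q'\<^sub>n(z) - \<Sum>\<^sub>k P'\<^sub>n(k) w'(k)\<close>; the last sum is \<open>H'\<^sub>0 \<delta>\<^sub>n\<^sub>0\<close> by orthogonality.
\<close>

section \<open>Lower unitriangular matrices\<close>

lemma ltinv_less: "n < m \<Longrightarrow> ltinv A n m = 0"
  by simp

lemma ltinv_diag: "ltinv A n n = 1"
  by simp

lemma ltinv_greater: "m < n \<Longrightarrow> ltinv A n m = - (\<Sum>k\<in>{m..<n}. A n k * ltinv A k m)"
  by simp

declare ltinv.simps [simp del]

lemma ltinv_right_inverse:
  assumes "lower_unitriangular A"
  shows "(\<Sum>k\<le>n. A n k * ltinv A k m) = (if n = m then 1 else 0)"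
proof (cases "m \<le> n")
  case False
  then show ?thesis by (auto intro!: sum.neutral simp: ltinv_less)
next
  case True
  have "(\<Sum>k\<le>n. A n k * ltinv A k m) = (\<Sum>k\<in>{m..n}. A n k * ltinv A k m)"
    by (rule sum.mono_neutral_right) (auto simp: ltinv_less)
  also have "\<dots> = ltinv A n m + (\<Sum>k\<in>{m..<n}. A n k * ltinv A k m)"
    using True assms by (simp add: sum.last_plus lower_unitriangular_def)
  finally show ?thesis
    using True by (cases "m = n") (simp_all add: ltinv_diag ltinv_greater)
qed

lemma ltmv_ltmv:
  assumes "\<forall>m l. m < l \<longrightarrow> B m l = 0"
  shows "ltmv A (ltmv B v) n = (\<Sum>l\<le>n. (\<Sum>m\<le>n. A n m * B m l) * v l)"
proof -
  have "ltmv A (ltmv B v) n = (\<Sum>m\<le>n. \<Sum>l\<le>n. A n m * B m l * v l)"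
    unfolding ltmv_def sum_distrib_left mult.assoc
  proof (rule sum.cong [OF refl])
    fix m assume "m \<in> {..n}"
    then show "(\<Sum>l\<le>m. A n m * (B m l * v l)) = (\<Sum>l\<le>n. A n m * (B m l * v l))"
      using assms by (intro sum.mono_neutral_left) auto
  qed
  also have "\<dots> = (\<Sum>l\<le>n. (\<Sum>m\<le>n. A n m * B m l) * v l)"
    by (subst sum.swap) (simp add: sum_distrib_right)
  finally show ?thesis .
qed

lemma ltmv_ltmv_ltinv:
  assumes "lower_unitriangular A"
  shows "ltmv A (ltmv (ltinv A) v) = v"
proof
  fix n
  have "ltmv A (ltmv (ltinv A) v) n = (\<Sum>l\<le>n. (if n = l then 1 else 0) * v l)"
    by (simp add: ltmv_ltmv ltinv_less ltinv_right_inverse [OF assms])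
  also have "\<dots> = v n"
    by (simp add: if_distrib [of "\<lambda>x. x * _"] cong: if_cong)
  finally show "ltmv A (ltmv (ltinv A) v) n = v n" .
qed

lemma ltmv_lower_unitriangular_inj:
  assumes A: "lower_unitriangular A" and eq: "ltmv A u = ltmv A v"
  shows "u = v"
proof
  have split: "ltmv A x n = x n + (\<Sum>k<n. A n k * x k)" for x n
    using A by (simp add: ltmv_def lessThan_Suc_atMost [symmetric] lower_unitriangular_def)
  fix n
  show "u n = v n"
  proof (induction n rule: less_induct)
    case (less n)
    then have "(\<Sum>k<n. A n k * u k) = (\<Sum>k<n. A n k * v k)"
      by simp
    then show ?case
      using split [of u n] split [of v n] fun_cong [OF eq, of n] by simp
  qed
qed

lemma ltmv_ltinv_ltmv:
  assumes "lower_unitriangular A"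
  shows "ltmv (ltinv A) (ltmv A u) = u"
  using assms by (rule ltmv_lower_unitriangular_inj) (simp add: ltmv_ltmv_ltinv [OF assms])

lemma ltmv_cmult: "c * ltmv A u n = ltmv A (\<lambda>m. c * u m) n"
  by (simp add: ltmv_def sum_distrib_left mult_ac)

lemma ltmv_diff: "ltmv A (\<lambda>m. u m - v m) n = ltmv A u n - ltmv A v n"
  by (simp add: ltmv_def right_diff_distrib sum_subtractf)

lemma polyP_eq_ltmv: "polyP S n x = ltmv S (\<lambda>l. x ^ l) n"
  by (simp add: polyP_def ltmv_def)

section \<open>Weighted sums against polynomials\<close>

lemma summable_moment_Bseq:
  assumes w: "finite_moments w" and g: "Bseq g"
  shows "summable (\<lambda>k. of_nat k ^ l * (w k * g k))"
proof -
  obtain K where K: "\<forall>k. norm (g k) \<le> K"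
    using g by (auto simp: Bseq_def)
  show ?thesis
  proof (rule summable_comparison_test' [where N = 0])
    show "summable (\<lambda>k. norm (of_nat k ^ l * w k) * K)"
      using w by (simp add: finite_moments_def summable_mult2)
    show "norm (of_nat k ^ l * (w k * g k)) \<le> norm (of_nat k ^ l * w k) * K" for k
      using K by (simp add: norm_mult mult.assoc mult_left_mono)
  qed
qed

lemma polyP_weighted_sums:
  assumes "finite_moments w" and "Bseq g"
  shows "(\<lambda>k. polyP S n (of_nat k) * (w k * g k)) sums ltmv S (moment (\<lambda>k. w k * g k)) n"
proof -
  have "(\<lambda>k. \<Sum>l\<le>n. S n l * (of_nat k ^ l * (w k * g k))) sums ltmv S (moment (\<lambda>k. w k * g k)) n"
    unfolding ltmv_def moment_def
    by (intro sums_sum sums_mult summable_sums summable_moment_Bseq assms)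
  then show ?thesis
    by (simp add: polyP_def sum_distrib_left sum_distrib_right mult_ac)
qed

lemma moment_cmult:
  assumes "summable (\<lambda>k. of_nat k ^ l * f k)"
  shows "c * moment f l = moment (\<lambda>k. c * f k) l"
  using suminf_mult [OF assms, of c] by (simp add: moment_def mult_ac)

lemma polyP_orthogonality:
  assumes chol: "cholesky (moment_matrix w) S H" and w: "finite_moments w"
  shows "(\<lambda>k. polyP S n (of_nat k) * w k) sums (if n = 0 then H 0 else 0)"
proof -
  have S: "lower_unitriangular S"
    using chol by (simp add: cholesky_def)
  have "moment w l = ltinv S l 0 * H 0" for l
  proof -
    have "moment w l = moment_matrix w l 0"
      by (simp add: moment_matrix_def)
    also have "\<dots> = ltinv S l 0 * H 0"
      using chol by (simp add: cholesky_def ltinv_diag)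
    finally show ?thesis .
  qed
  then have "ltmv S (moment w) n = (\<Sum>l\<le>n. S n l * ltinv S l 0) * H 0"
    by (simp add: ltmv_def sum_distrib_left mult_ac)
  also have "\<dots> = (if n = 0 then H 0 else 0)"
    by (simp add: ltinv_right_inverse [OF S])
  moreover have "(\<lambda>k. polyP S n (of_nat k) * w k) sums ltmv S (moment w) n"
    using polyP_weighted_sums [OF w convergent_imp_Bseq [OF convergent_const [of 1]]] by simp
  ultimately show ?thesis
    by simp
qed

lemma inverse_diff_of_nat_LIMSEQ: "(\<lambda>k. inverse (z - of_nat k :: complex)) \<longlonglongrightarrow> 0"
proof -
  have "filterlim (\<lambda>k. - of_nat k :: complex) at_infinity sequentially"
    by (simp add: filterlim_at_infinity_conv_norm_at_top filterlim_real_sequentially)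
  then have "filterlim (\<lambda>k. z - of_nat k) at_infinity sequentially"
    unfolding diff_conv_add_uminus by (rule tendsto_add_filterlim_at_infinity [OF tendsto_const])
  then show ?thesis
    by (rule filterlim_compose [OF tendsto_inverse_0])
qed

lemma Bseq_inverse_diff_of_nat: "Bseq (\<lambda>k. inverse (z - of_nat k :: complex))"
  using inverse_diff_of_nat_LIMSEQ by (intro convergent_imp_Bseq convergentI)

lemma funQ_sums:
  assumes "finite_moments w"
  shows "(\<lambda>k. polyP S n (of_nat k) * (w k * inverse (z - of_nat k))) sums funQ S w n z"
  using polyP_weighted_sums [OF assms Bseq_inverse_diff_of_nat [of z]]
  by (simp add: funQ_def sums_iff divide_inverse mult.assoc)

lemma funQ_eq_ltmv_moment:
  assumes "finite_moments w"
  shows "funQ S w n z = ltmv S (moment (\<lambda>k. w k * inverse (z - of_nat k))) n"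
  using sums_unique2 [OF funQ_sums [OF assms]
      polyP_weighted_sums [OF assms Bseq_inverse_diff_of_nat [of z]]]
  by simp

lemma Bseq_shifted_cauchy:
  fixes z c :: complex
  assumes z: "\<forall>k::nat. z \<noteq> of_nat k"
  shows "Bseq (\<lambda>k. (of_nat k + c) / (z - of_nat k))"
proof -
  have "(\<lambda>k. (z + c) * inverse (z - of_nat k) - 1) \<longlonglongrightarrow> (z + c) * 0 - 1"
    by (intro tendsto_diff tendsto_mult tendsto_const inverse_diff_of_nat_LIMSEQ)
  moreover have "(of_nat k + c) / (z - of_nat k) = (z + c) * inverse (z - of_nat k) - 1" for k
    using z by (simp add: field_simps)
  ultimately show ?thesis
    by (intro convergent_imp_Bseq convergentI) simp
qed

lemma ltmv_moment_shifted_cauchy: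
  assumes chol: "cholesky (moment_matrix w) S H" and w: "finite_moments w"
    and z: "\<forall>k::nat. z \<noteq> of_nat k"
  shows "ltmv S (moment (\<lambda>k. w k * ((of_nat k + c) / (z - of_nat k)))) n
    = (z + c) * funQ S w n z - (if n = 0 then H 0 else 0)"
proof -
  have "(z + c) * (polyP S n (of_nat k) * (w k * inverse (z - of_nat k))) - polyP S n (of_nat k) * w k
      = polyP S n (of_nat k) * (w k * ((of_nat k + c) / (z - of_nat k)))" for k
    using z by (simp add: field_simps)
  moreover have "(\<lambda>k. (z + c) * (polyP S n (of_nat k) * (w k * inverse (z - of_nat k)))
      - polyP S n (of_nat k) * w k) sums ((z + c) * funQ S w n z - (if n = 0 then H 0 else 0))"
    by (intro sums_diff sums_mult funQ_sums polyP_orthogonality chol w)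
  ultimately have "(\<lambda>k. polyP S n (of_nat k) * (w k * ((of_nat k + c) / (z - of_nat k))))
      sums ((z + c) * funQ S w n z - (if n = 0 then H 0 else 0))"
    by simp
  with polyP_weighted_sums [OF w Bseq_shifted_cauchy [OF z]] show ?thesis
    by (rule sums_unique2)
qed

lemma ltmv_pascal_moment:
  assumes "\<And>m. summable (\<lambda>k. of_nat k ^ m * f k)"
  shows "ltmv pascal (moment f) l = (\<Sum>k. (of_nat k + 1) ^ l * f k)"
proof -
  have "(\<lambda>k. \<Sum>m\<le>l. pascal l m * (of_nat k ^ m * f k)) sums ltmv pascal (moment f) l"
    unfolding ltmv_def moment_def by (intro sums_sum sums_mult summable_sums assms)
  moreover have "(\<Sum>m\<le>l. pascal l m * (of_nat k ^ m * f k)) = (of_nat k + 1) ^ l * f k" for k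
    by (simp add: pascal_def binomial_ring [of "of_nat k"] sum_distrib_left sum_distrib_right mult_ac)
  ultimately show ?thesis
    by (simp add: sums_iff)
qed

lemma ltmv_pascal_powers: "ltmv pascal (\<lambda>m. x ^ m) l = (x + 1) ^ l"
  by (simp add: ltmv_def pascal_def binomial_ring [of x] mult_ac)

section \<open>Contiguity relations of the weight\<close>

lemma mult_pochhammer_plus_one: "x * pochhammer (x + 1) k = (x + of_nat k) * pochhammer x k"
  using pochhammer_rec [of x k] pochhammer_rec' [of x k] by simp

lemma prod_fun_upd_remove:
  assumes "finite A" and "i \<in> A"
  shows "(\<Prod>l\<in>A. f ((g(i := x)) l)) = f x * (\<Prod>l\<in>A - {i}. f (g l))"
  using assms by (simp add: prod.remove)

lemma wgt_upd_a:
  assumes i: "i \<in> {1..M}"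
  shows "(a i - 1) * wgt eta M a N b k = (of_nat k + a i - 1) * wgt eta M (a(i := a i - 1)) N b k"
proof -
  define X where "X = (\<Prod>l\<in>{1..M} - {i}. pochhammer (a l) k)
    / (fact k * (\<Prod>l=1..N. pochhammer (b l) k)) * eta ^ k"
  have wgt: "wgt eta M a N b k = pochhammer (a i) k * X"
    using i by (simp add: wgt_def X_def prod.remove)
  have "(\<Prod>l=1..M. pochhammer ((a(i := a i - 1)) l) k)
      = pochhammer (a i - 1) k * (\<Prod>l\<in>{1..M} - {i}. pochhammer (a l) k)"
    using i by (intro prod_fun_upd_remove [where f = "\<lambda>x. pochhammer x k"]) auto
  then have wgt_upd: "wgt eta M (a(i := a i - 1)) N b k = pochhammer (a i - 1) k * X"
    by (simp add: wgt_def X_def)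
  have "(a i - 1) * pochhammer (a i) k = (of_nat k + a i - 1) * pochhammer (a i - 1) k"
    using mult_pochhammer_plus_one [of "a i - 1" k] by (simp add: algebra_simps)
  then show ?thesis
    unfolding wgt wgt_upd by (simp only: mult.assoc [symmetric])
qed

lemma wgt_upd_b:
  assumes j: "j \<in> {1..N}" and b: "\<forall>m::nat. b j \<noteq> - of_nat m"
  shows "b j * wgt eta M a N b k = (of_nat k + b j) * wgt eta M a N (b(j := b j + 1)) k"
proof -
  define X where "X = (\<Prod>l=1..M. pochhammer (a l) k)
    * inverse (fact k * (\<Prod>l\<in>{1..N} - {j}. pochhammer (b l) k)) * eta ^ k"
  have wgt: "wgt eta M a N b k = inverse (pochhammer (b j) k) * X"
    using j by (simp add: wgt_def X_def prod.remove divide_inverse mult_ac)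
  have "(\<Prod>l=1..N. pochhammer ((b(j := b j + 1)) l) k)
      = pochhammer (b j + 1) k * (\<Prod>l\<in>{1..N} - {j}. pochhammer (b l) k)"
    using j by (intro prod_fun_upd_remove [where f = "\<lambda>x. pochhammer x k"]) auto
  then have wgt_upd: "wgt eta M a N (b(j := b j + 1)) k = inverse (pochhammer (b j + 1) k) * X"
    by (simp add: wgt_def X_def divide_inverse mult_ac)
  have "b j + 1 \<noteq> - of_nat m" for m
    using b by (metis add.assoc eq_neg_iff_add_eq_0 of_nat_Suc)
  then have "pochhammer (b j) k \<noteq> 0" and "pochhammer (b j + 1) k \<noteq> 0"
    using b by (auto simp: pochhammer_eq_0_iff)
  then have "b j * inverse (pochhammer (b j) k) = (of_nat k + b j) * inverse (pochhammer (b j + 1) k)"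
    using mult_pochhammer_plus_one [of "b j" k] by (simp add: field_simps)
  then show ?thesis
    unfolding wgt wgt_upd by (simp only: mult.assoc [symmetric])
qed

text \<open>No condition on \<open>b\<close> is needed: if some \<open>b\<^sub>l - 1\<close> or \<open>(b\<^sub>l)\<^sub>k\<close> vanishes, both sides
  are \<open>0\<close> because division by zero yields \<open>0\<close>.\<close>
lemma wgt_shift:
  "eta * (\<Prod>l=1..M. a l - 1) / (\<Prod>l=1..N. b l - 1) * wgt eta M a N b k
    = of_nat (Suc k) * wgt eta M (\<lambda>l. a l - 1) N (\<lambda>l. b l - 1) (Suc k)"
proof -
  have "pochhammer (x - 1) (Suc k) = (x - 1) * pochhammer x k" for x :: complex
    by (simp add: pochhammer_rec)
  moreover have "of_nat (Suc k) * inverse (of_nat (Suc k) :: complex) = 1"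
    by (simp del: of_nat_Suc)
  ultimately show ?thesis
    by (simp add: wgt_def prod.distrib divide_inverse mult_ac del: of_nat_Suc)
qed

section \<open>The three relations for the second kind functions\<close>

lemma funQ_contiguous_relation:
  assumes S: "lower_unitriangular S" and v: "finite_moments v"
    and chol': "cholesky (moment_matrix v') S' H'" and v': "finite_moments v'"
    and rel: "\<And>k. c * v k = (of_nat k + c) * v' k"
    and z: "\<forall>k::nat. z \<noteq> of_nat k"
  shows "c * ltmv S' (ltmv (ltinv S) (\<lambda>m. funQ S v m z)) n
    = (z + c) * funQ S' v' n z - (if n = 0 then H' 0 else 0)"
proof -
  have "ltmv (ltinv S) (\<lambda>m. funQ S v m z) = moment (\<lambda>k. v k * inverse (z - of_nat k))"
    using ltmv_ltinv_ltmv [OF S] by (simp add: funQ_eq_ltmv_moment [OF v])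
  then have "c * ltmv S' (ltmv (ltinv S) (\<lambda>m. funQ S v m z)) n
      = ltmv S' (\<lambda>l. c * moment (\<lambda>k. v k * inverse (z - of_nat k)) l) n"
    by (simp add: ltmv_cmult)
  also have "(\<lambda>l. c * moment (\<lambda>k. v k * inverse (z - of_nat k)) l)
      = moment (\<lambda>k. v' k * ((of_nat k + c) / (z - of_nat k)))"
  proof
    fix l
    have "c * (v k * inverse (z - of_nat k)) = v' k * ((of_nat k + c) / (z - of_nat k))" for k
      using rel [of k] by (simp add: divide_inverse mult.assoc [symmetric])
    then show "c * moment (\<lambda>k. v k * inverse (z - of_nat k)) l
        = moment (\<lambda>k. v' k * ((of_nat k + c) / (z - of_nat k))) l"
      by (simp add: moment_cmult summable_moment_Bseq [OF v Bseq_inverse_diff_of_nat])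
  qed
  also have "ltmv S' (moment (\<lambda>k. v' k * ((of_nat k + c) / (z - of_nat k)))) n
      = (z + c) * funQ S' v' n z - (if n = 0 then H' 0 else 0)"
    by (rule ltmv_moment_shifted_cauchy [OF chol' v' z])
  finally show ?thesis .
qed

lemma ltmv_pascal_cauchy_moment:
  assumes v: "finite_moments v" and v': "finite_moments v'"
    and rel: "\<And>k. U * v k = of_nat (Suc k) * v' (Suc k)"
    and z: "\<forall>k::nat. z \<noteq> of_nat k"
  shows "ltmv pascal (moment (\<lambda>k. U * (v k * inverse (z - 1 - of_nat k)))) l
    = moment (\<lambda>k. v' k * (of_nat k / (z - of_nat k))) l"
proof -
  define h where "h k = of_nat k ^ l * (v' k * (of_nat k / (z - of_nat k)))" for k
  have "(of_nat k + 1) ^ l * (U * (v k * inverse (z - 1 - of_nat k))) = h (Suc k)" for k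
  proof -
    have "(of_nat k + 1) ^ l * (U * (v k * inverse (z - 1 - of_nat k)))
        = (of_nat k + 1) ^ l * (U * v k * inverse (z - of_nat (Suc k)))"
      by (simp add: diff_diff_eq add.commute mult.assoc)
    also have "\<dots> = h (Suc k)"
      unfolding rel by (simp add: h_def divide_inverse add.commute mult_ac)
    finally show ?thesis .
  qed
  moreover have "summable (\<lambda>k. of_nat k ^ m * (U * (v k * inverse (z - 1 - of_nat k))))" for m
    using summable_mult [OF summable_moment_Bseq [OF v Bseq_inverse_diff_of_nat], of U]
    by (simp add: mult_ac)
  ultimately have "ltmv pascal (moment (\<lambda>k. U * (v k * inverse (z - 1 - of_nat k)))) l = (\<Sum>k. h (Suc k))"
    by (simp add: ltmv_pascal_moment)
  also have "\<dots> = suminf h"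
  proof -
    have "Bseq (\<lambda>k. of_nat k / (z - of_nat k))"
      using Bseq_shifted_cauchy [OF z, of 0] by simp
    then have "summable h"
      unfolding h_def by (rule summable_moment_Bseq [OF v'])
    moreover have "h 0 = 0"
      by (simp add: h_def)
    ultimately show ?thesis
      by (simp add: suminf_split_head)
  qed
  finally show ?thesis
    by (simp add: moment_def h_def [abs_def])
qed

lemma funQ_pascal_relation:
  assumes S: "lower_unitriangular S" and v: "finite_moments v"
    and chol': "cholesky (moment_matrix v') S' H'" and v': "finite_moments v'"
    and rel: "\<And>k. U * v k = of_nat (Suc k) * v' (Suc k)"
    and z: "\<forall>k::nat. z \<noteq> of_nat k"
  shows "ltmv S' (ltmv pascal (ltmv (ltinv S) (\<lambda>m. U * funQ S v m (z - 1) - polyP S m (z - 1)))) n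
    = z * funQ S' v' n z - polyP S' n z - (if n = 0 then H' 0 else 0)"
proof -
  let ?C = "moment (\<lambda>k. U * (v k * inverse (z - 1 - of_nat k)))"
  have "U * funQ S v m (z - 1) = ltmv S ?C m" for m
    unfolding funQ_eq_ltmv_moment [OF v] ltmv_cmult
    by (simp add: moment_cmult summable_moment_Bseq [OF v Bseq_inverse_diff_of_nat])
  then have "(\<lambda>m. U * funQ S v m (z - 1) - polyP S m (z - 1)) = ltmv S (\<lambda>l. ?C l - (z - 1) ^ l)"
    by (simp add: fun_eq_iff ltmv_diff polyP_eq_ltmv)
  then have cancel: "ltmv (ltinv S) (\<lambda>m. U * funQ S v m (z - 1) - polyP S m (z - 1))
      = (\<lambda>l. ?C l - (z - 1) ^ l)"
    by (simp add: ltmv_ltinv_ltmv [OF S])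
  have "ltmv pascal (ltmv (ltinv S) (\<lambda>m. U * funQ S v m (z - 1) - polyP S m (z - 1)))
      = (\<lambda>l. moment (\<lambda>k. v' k * (of_nat k / (z - of_nat k))) l - z ^ l)"
    unfolding cancel by (simp add: ltmv_diff ltmv_pascal_powers fun_eq_iff ltmv_pascal_cauchy_moment [OF v v' rel z])
  with ltmv_moment_shifted_cauchy [OF chol' v' z, where c = 0] show ?thesis
    by (simp add: ltmv_diff polyP_eq_ltmv [of S'])
qed

theorem mainTheorem5:
  fixes eta :: complex and M N :: nat and a b :: "nat \<Rightarrow> complex" and i j :: nat
    and S Si Sj ST :: "nat \<Rightarrow> nat \<Rightarrow> complex" and H Hi Hj HT :: "nat \<Rightarrow> complex"
    and z :: complex
  assumes i: "i \<in> {1..M}" and j: "j \<in> {1..N}"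
    and b_wd: "\<forall>l\<in>{1..N}. \<forall>k::nat. b l \<noteq> - of_nat k \<and> b l - 1 \<noteq> - of_nat k"
    and mom: "finite_moments (wgt eta M a N b)"
    and mom_i: "finite_moments (wgt eta M (a(i := a i - 1)) N b)"
    and mom_j: "finite_moments (wgt eta M a N (b(j := b j + 1)))"
    and mom_T: "finite_moments (wgt eta M (\<lambda>l. a l - 1) N (\<lambda>l. b l - 1))"
    and chol: "cholesky (moment_matrix (wgt eta M a N b)) S H"
    and chol_i: "cholesky (moment_matrix (wgt eta M (a(i := a i - 1)) N b)) Si Hi"
    and chol_j: "cholesky (moment_matrix (wgt eta M a N (b(j := b j + 1)))) Sj Hj"
    and chol_T: "cholesky (moment_matrix (wgt eta M (\<lambda>l. a l - 1) N (\<lambda>l. b l - 1))) ST HT"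
    and z: "\<forall>k::nat. z \<noteq> of_nat k"
  shows "\<forall>n.
      (a i - 1) * ltmv Si (ltmv (ltinv S) (\<lambda>m. funQ S (wgt eta M a N b) m z)) n
        = (z + a i - 1) * funQ Si (wgt eta M (a(i := a i - 1)) N b) n z
          - (if n = 0 then Hi 0 else 0)
    \<and> b j * ltmv Sj (ltmv (ltinv S) (\<lambda>m. funQ S (wgt eta M a N b) m z)) n
        = (z + b j) * funQ Sj (wgt eta M a N (b(j := b j + 1))) n z
          - (if n = 0 then Hj 0 else 0)
    \<and> ltmv ST (ltmv pascal (ltmv (ltinv S)
          (\<lambda>m. eta * (\<Prod>l=1..M. a l - 1) / (\<Prod>l=1..N. b l - 1)
                 * funQ S (wgt eta M a N b) m (z - 1) - polyP S m (z - 1)))) n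
        = z * funQ ST (wgt eta M (\<lambda>l. a l - 1) N (\<lambda>l. b l - 1)) n z
          - polyP ST n z - (if n = 0 then HT 0 else 0)"
proof (intro allI conjI)
  fix n
  have S: "lower_unitriangular S"
    using chol by (simp add: cholesky_def)
  show "(a i - 1) * ltmv Si (ltmv (ltinv S) (\<lambda>m. funQ S (wgt eta M a N b) m z)) n
      = (z + a i - 1) * funQ Si (wgt eta M (a(i := a i - 1)) N b) n z - (if n = 0 then Hi 0 else 0)"
    using funQ_contiguous_relation [OF S mom chol_i mom_i _ z, of "a i - 1"] wgt_upd_a [OF i]
    by (simp add: add_diff_eq)
  show "b j * ltmv Sj (ltmv (ltinv S) (\<lambda>m. funQ S (wgt eta M a N b) m z)) n
      = (z + b j) * funQ Sj (wgt eta M a N (b(j := b j + 1))) n z - (if n = 0 then Hj 0 else 0)"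
    using j b_wd by (intro funQ_contiguous_relation [OF S mom chol_j mom_j wgt_upd_b z]) auto
  show "ltmv ST (ltmv pascal (ltmv (ltinv S)
        (\<lambda>m. eta * (\<Prod>l=1..M. a l - 1) / (\<Prod>l=1..N. b l - 1)
               * funQ S (wgt eta M a N b) m (z - 1) - polyP S m (z - 1)))) n
      = z * funQ ST (wgt eta M (\<lambda>l. a l - 1) N (\<lambda>l. b l - 1)) n z
        - polyP ST n z - (if n = 0 then HT 0 else 0)"
    by (rule funQ_pascal_relation [OF S mom chol_T mom_T wgt_shift z])
qed

end
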